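(* Set $\lambda_*=1/\tau^2$. Along the branch of the discrete Neumann correspondence $\mathfrak B_r$ for which $\Gamma=\frac1\tau\mathbf I_r+O(\tau)$ as $\tau\to0$, one has $$\Gamma=\frac1\tau\mathbf I_r-\frac\tau2\big(X^TAX+P^TP\big)+O(\tau^2),$$ and, writing $\tilde X=X+\tau\dot X+O(\tau^2)$, $\tilde P=P+\tau\dot P+O(\tau^2)$, the first-order terms satisfy the continuous Neumann system with Euclidean metric $$\dot X=P,\qquad \dot P=AX+X\Lambda,\qquad \Lambda=-X^TAX-P^TP.$$
   Context: $A=\mathrm{diag}(a_1,\dots,a_n)$, $A(\lambda)=\lambda\mathbf I_n-A$, $A^{\pm1/2}(\lambda_* )$ the diagonal matrices with entries $(\lambda_*-a_i)^{\pm1/2}$ (positive for large real $\lambda_*$). $(X,P)$ are $n\times r$ matrices with $X^TX=\mathbf I_r$, $X^TP+P^TX=0$. The discrete Neumann correspondence is $\tilde X=A^{-1/2}(\lambda_* )(P+X\Gamma)$, $\tilde P=-A^{1/2}(\lambda_* )X+A^{-1/2}(\lambda_* )(P+X\Gamma)\Gamma$, where $\Gamma$ is a symmetric $r\times r$ solution of $\Gamma\mathbf U\Gamma+\Gamma\mathbf V+\mathbf V^T\Gamma-\mathbf W=0$ with $\mathbf U=X^TA^{-1}(\lambda_* )X$, $\mathbf V=X^TA^{-1}(\lambda_* )P$, $\mathbf W=\mathbf I_r-P^TA^{-1}(\lambda_* )P$. *)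

theory Defs
  imports "HOL-Analysis.Analysis" "HOL-Library.Landau_Symbols"
begin

definition diagA :: "real^'n \<Rightarrow> real^'n^'n" where
  "diagA a = (\<chi> i j. if i = j then a $ i else 0)"

text \<open>A^{-1}(lam) = (lam I - A)^{-1}, diagonal with entries 1/(lam - a_i).\<close>
definition Ainv :: "real \<Rightarrow> real^'n \<Rightarrow> real^'n^'n" where
  "Ainv lam a = (\<chi> i j. if i = j then inverse (lam - a $ i) else 0)"

definition Ahalf :: "real \<Rightarrow> real^'n \<Rightarrow> real^'n^'n" where
  "Ahalf lam a = (\<chi> i j. if i = j then sqrt (lam - a $ i) else 0)"

definition Aminushalf :: "real \<Rightarrow> real^'n \<Rightarrow> real^'n^'n" where
  "Aminushalf lam a = (\<chi> i j. if i = j then inverse (sqrt (lam - a $ i)) else 0)"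

definition riccati :: "real \<Rightarrow> real^'n \<Rightarrow> real^'r^'n \<Rightarrow> real^'r^'n \<Rightarrow> real^'r^'r \<Rightarrow> bool" where
  "riccati lam a X P G =
     (let U = transpose X ** Ainv lam a ** X;
          V = transpose X ** Ainv lam a ** P;
          W = mat 1 - transpose P ** Ainv lam a ** P
      in G ** U ** G + G ** V + transpose V ** G - W = 0)"

definition Xtilde :: "real \<Rightarrow> real^'n \<Rightarrow> real^'r^'n \<Rightarrow> real^'r^'n \<Rightarrow> real^'r^'r \<Rightarrow> real^'r^'n" where
  "Xtilde lam a X P G = Aminushalf lam a ** (P + X ** G)"

definition Ptilde :: "real \<Rightarrow> real^'n \<Rightarrow> real^'r^'n \<Rightarrow> real^'r^'n \<Rightarrow> real^'r^'r \<Rightarrow> real^'r^'n" where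
  "Ptilde lam a X P G = - (Ahalf lam a ** X) + Aminushalf lam a ** (P + X ** G) ** G"

end

theory Submission
  imports Defs "HOL-Real_Asymp.Real_Asymp"
begin

text \<open>
  With \<open>\<lambda> = 1/\<tau>\<^sup>2\<close> the diagonal matrices of the correspondence have explicit expansions
  \<open>A\<^sup>-\<^sup>1(\<lambda>) = \<tau>\<^sup>2I + \<tau>\<^sup>4A + O(\<tau>\<^sup>6)\<close>, \<open>A\<^sup>-\<^sup>1\<^sup>/\<^sup>2(\<lambda>) = \<tau>I + \<tau>\<^sup>3A/2 + O(\<tau>\<^sup>5)\<close> and
  \<open>A\<^sup>1\<^sup>/\<^sup>2(\<lambda>) = I/\<tau> - \<tau>A/2 + O(\<tau>\<^sup>3)\<close>. Writing \<open>\<Gamma> = I/\<tau> + G\<close> with \<open>G = O(\<tau>)\<close>, the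
  Riccati equation becomes \<open>2\<tau>G + \<tau>\<^sup>2(X\<^sup>TAX + P\<^sup>TP) + \<tau>(X\<^sup>TP + P\<^sup>TX) = O(\<tau>\<^sup>3)\<close>, where
  \<open>X\<^sup>TX = I\<close> has been used and the tangency condition kills the middle term; this is the
  second-order expansion of \<open>\<Gamma>\<close>. Substituting it and the square-root expansions into the
  definitions of \<open>X\<^sup>~\<close> and \<open>P\<^sup>~\<close> gives their first-order terms. All remainders are
  handled by a calculus of bounds \<open>O(\<tau>\<^sup>k)\<close>, \<open>k \<in> \<int>\<close>, which is closed under sums and
  bounded bilinear products and adds the exponents.
\<close>

definition bigo_at0 :: "(real \<Rightarrow> 'a::real_normed_vector) \<Rightarrow> int \<Rightarrow> bool" where
  "bigo_at0 f k \<longleftrightarrow> (\<lambda>t. norm (f t)) \<in> O[at_right 0](\<lambda>t. t powi k)"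

lemma bigo_at0_cong:
  assumes "\<forall>\<^sub>F t in at_right 0. f t = g t" and "bigo_at0 g k"
  shows "bigo_at0 f k"
proof -
  from assms(1) have "\<forall>\<^sub>F t in at_right 0. norm (f t) = norm (g t)"
    by (rule eventually_mono) simp
  with assms(2) show ?thesis unfolding bigo_at0_def by (simp add: landau_o.big.in_cong)
qed

lemma powi_bigo_powi_at0:
  assumes "l \<le> k" shows "(\<lambda>t. t powi k) \<in> O[at_right 0](\<lambda>t::real. t powi l)"
proof (rule landau_o.big_mono)
  have "\<forall>\<^sub>F t in at_right 0. 0 < t \<and> t < (1::real)"
    by (simp add: eventually_at_right_field) (use zero_less_one in blast)
  then show "\<forall>\<^sub>F t in at_right 0. norm (t powi k) \<le> norm ((t::real) powi l)"
  proof eventually_elim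
    case (elim t)
    then have "t powi k = t powi l * t powi (k - l)" by (simp flip: power_int_add)
    moreover have "t powi (k - l) \<le> 1"
      using elim assms by (intro power_int_le_one) auto
    ultimately show ?case using elim by (simp add: mult_left_le)
  qed
qed

lemma bigo_at0_mono: "bigo_at0 f k \<Longrightarrow> l \<le> k \<Longrightarrow> bigo_at0 f l"
  unfolding bigo_at0_def using landau_o.big_trans powi_bigo_powi_at0 by blast

lemma bigo_at0_add:
  assumes "bigo_at0 f k" "bigo_at0 g l" shows "bigo_at0 (\<lambda>t. f t + g t) (min k l)"
proof -
  have "(\<lambda>t. norm (f t + g t)) \<in> O[at_right 0](\<lambda>t. norm (f t) + norm (g t))"
    by (intro landau_o.big_mono always_eventually allI) (simp add: norm_triangle_ineq)
  also have "(\<lambda>t. norm (f t) + norm (g t)) \<in> O[at_right 0](\<lambda>t. t powi (min k l))"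
    using bigo_at0_mono[OF assms(1), of "min k l"] bigo_at0_mono[OF assms(2), of "min k l"]
    unfolding bigo_at0_def by (intro sum_in_bigo) auto
  finally show ?thesis unfolding bigo_at0_def .
qed

lemma bigo_at0_minus: "bigo_at0 f k \<Longrightarrow> bigo_at0 (\<lambda>t. - f t) k"
  by (simp add: bigo_at0_def)

lemma bigo_at0_diff:
  "bigo_at0 f k \<Longrightarrow> bigo_at0 g l \<Longrightarrow> bigo_at0 (\<lambda>t. f t - g t) (min k l)"
  using bigo_at0_add[of f k "\<lambda>t. - g t" l] by (simp add: bigo_at0_minus)

lemma bigo_at0_bilinear:
  assumes h: "bounded_bilinear h" and "bigo_at0 f k" "bigo_at0 g l"
  shows "bigo_at0 (\<lambda>t. h (f t) (g t)) (k + l)"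
proof -
  obtain C where "\<And>x y. norm (h x y) \<le> norm x * norm y * C"
    using bounded_bilinear.bounded[OF h] by blast
  then have "(\<lambda>t. norm (h (f t) (g t))) \<in> O[at_right 0](\<lambda>t. norm (f t) * norm (g t))"
    by (intro bigoI[where c = C] always_eventually) (auto simp: mult_ac)
  also have "(\<lambda>t. norm (f t) * norm (g t)) \<in> O[at_right 0](\<lambda>t. t powi k * t powi l)"
    using assms(2,3) unfolding bigo_at0_def by (rule landau_o.big.mult)
  also have "(\<lambda>t. t powi k * t powi l) \<in> O[at_right 0](\<lambda>t::real. t powi (k + l))"
    by (intro landau_o.big_mono eventually_mono[OF eventually_at_right_less])
       (simp add: power_int_add)
  finally show ?thesis unfolding bigo_at0_def .
qed

lemma bounded_bilinear_matrix_mult: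
  "bounded_bilinear ((**) :: real^'k^'m \<Rightarrow> real^'n^'k \<Rightarrow> real^'n^'m)"
  unfolding bilinear_conv_bounded_bilinear[symmetric] bilinear_def linear_iff
  by (simp add: matrix_add_ldistrib vec_eq_iff matrix_matrix_mult_def sum.distrib algebra_simps
      sum_distrib_left)

lemmas bigo_at0_scaleR = bigo_at0_bilinear[OF bounded_bilinear_scaleR]
lemmas bigo_at0_mult = bigo_at0_bilinear[OF bounded_bilinear_mult]
lemmas bigo_at0_matrix_mult = bigo_at0_bilinear[OF bounded_bilinear_matrix_mult]

lemma bigo_at0_const: "bigo_at0 (\<lambda>t. c) 0"
  by (simp add: bigo_at0_def)

lemma bigo_at0_power: "bigo_at0 (\<lambda>t. t ^ n) (int n)"
  by (simp add: bigo_at0_def)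

lemma bigo_at0_ident: "bigo_at0 (\<lambda>t. t) 1"
  by (simp add: bigo_at0_def)

lemma bigo_at0_inverse_power: "bigo_at0 (\<lambda>t. 1 / t ^ n) (- int n)"
proof -
  have "\<forall>\<^sub>F t in at_right 0. norm (1 / t ^ n) = t powi (- int n)"
    by (rule eventually_mono[OF eventually_at_right_less]) (simp add: power_int_minus divide_inverse)
  then show ?thesis unfolding bigo_at0_def by (simp add: landau_o.big.in_cong)
qed

lemma bigo_at0_inverse: "bigo_at0 (\<lambda>t. 1 / t) (- 1)"
  using bigo_at0_inverse_power[of 1] by simp

lemma bigo_at0_divide_const:
  fixes f :: "real \<Rightarrow> 'a::real_normed_field"
  shows "bigo_at0 f k \<Longrightarrow> bigo_at0 (\<lambda>t. f t / c) k"
  using bigo_at0_mult[of f k "\<lambda>t. inverse c" 0] by (simp add: bigo_at0_const divide_inverse)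

lemmas bigo_at0_intros = bigo_at0_add bigo_at0_diff bigo_at0_minus bigo_at0_scaleR
  bigo_at0_mult bigo_at0_matrix_mult bigo_at0_divide_const bigo_at0_const bigo_at0_power
  bigo_at0_ident bigo_at0_inverse_power bigo_at0_inverse

lemma norm_diag_matrix_le:
  "norm ((\<chi> i j. if i = j then d i else 0) :: real^'n^'n) \<le> (\<Sum>i\<in>UNIV. \<bar>d i\<bar>)"
proof -
  let ?D = "(\<chi> i j. if i = j then d i else 0) :: real^'n^'n"
  have "norm ?D \<le> (\<Sum>i\<in>UNIV. norm (?D $ i))"
    unfolding norm_vec_def by (rule L2_set_le_sum) simp
  also have "\<dots> \<le> (\<Sum>i\<in>UNIV. \<Sum>j\<in>UNIV. \<bar>?D $ i $ j\<bar>)"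
    by (intro sum_mono norm_le_l1_cart)
  also have "\<dots> = (\<Sum>i\<in>UNIV. \<bar>d i\<bar>)"
    by (simp add: if_distrib[of abs] cong: if_cong)
  finally show ?thesis .
qed

lemma bigo_at0_diag:
  assumes "\<And>i. bigo_at0 (d i) k"
  shows "bigo_at0 (\<lambda>t. (\<chi> i j. if i = j then d i t else 0) :: real^'n^'n) k"
proof -
  have "(\<lambda>t. norm ((\<chi> i j. if i = j then d i t else 0) :: real^'n^'n))
      \<in> O[at_right 0](\<lambda>t. \<Sum>i\<in>UNIV. \<bar>d i t\<bar>)"
    by (intro landau_o.big_mono always_eventually allI) (simp add: norm_diag_matrix_le)
  also have "(\<lambda>t. \<Sum>i\<in>UNIV. \<bar>d i t\<bar>) \<in> O[at_right 0](\<lambda>t. t powi k)"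
    using assms unfolding bigo_at0_def by (intro big_sum_in_bigo) simp
  finally show ?thesis unfolding bigo_at0_def .
qed

lemma inverse_shift_expansion: "bigo_at0 (\<lambda>t. inverse (1 / t^2 - c) - t^2 - t^4 * c) 6"
  unfolding bigo_at0_def power_int_numeral real_norm_def landau_o.big.abs_in_iff by real_asymp

lemma inverse_sqrt_shift_expansion: "bigo_at0 (\<lambda>t. inverse (sqrt (1 / t^2 - c)) - t - t^3 / 2 * c) 5"
  unfolding bigo_at0_def power_int_numeral real_norm_def landau_o.big.abs_in_iff by real_asymp

lemma sqrt_shift_expansion: "bigo_at0 (\<lambda>t. sqrt (1 / t^2 - c) - 1 / t + t / 2 * c) 3"
  unfolding bigo_at0_def power_int_numeral real_norm_def landau_o.big.abs_in_iff by real_asymp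

lemma Ainv_expansion:
  "bigo_at0 (\<lambda>t. Ainv (1 / t^2) a - t^2 *\<^sub>R mat 1 - t^4 *\<^sub>R diagA a) 6"
proof -
  have "(\<lambda>t. Ainv (1 / t^2) a - t^2 *\<^sub>R mat 1 - t^4 *\<^sub>R diagA a)
      = (\<lambda>t. \<chi> i j. if i = j then inverse (1 / t^2 - a $ i) - t^2 - t^4 * a $ i else 0)"
    by (simp add: Ainv_def diagA_def mat_def fun_eq_iff vec_eq_iff)
  then show ?thesis by (simp only:) (rule bigo_at0_diag, rule inverse_shift_expansion)
qed

lemma Aminushalf_expansion:
  "bigo_at0 (\<lambda>t. Aminushalf (1 / t^2) a - t *\<^sub>R mat 1 - (t^3 / 2) *\<^sub>R diagA a) 5"
proof -
  have "(\<lambda>t. Aminushalf (1 / t^2) a - t *\<^sub>R mat 1 - (t^3 / 2) *\<^sub>R diagA a)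
      = (\<lambda>t. \<chi> i j. if i = j then inverse (sqrt (1 / t^2 - a $ i)) - t - t^3 / 2 * a $ i else 0)"
    by (simp add: Aminushalf_def diagA_def mat_def fun_eq_iff vec_eq_iff)
  then show ?thesis by (simp only:) (rule bigo_at0_diag, rule inverse_sqrt_shift_expansion)
qed

lemma Ahalf_expansion:
  "bigo_at0 (\<lambda>t. Ahalf (1 / t^2) a - (1 / t) *\<^sub>R mat 1 + (t / 2) *\<^sub>R diagA a) 3"
proof -
  have "(\<lambda>t. Ahalf (1 / t^2) a - (1 / t) *\<^sub>R mat 1 + (t / 2) *\<^sub>R diagA a)
      = (\<lambda>t. \<chi> i j. if i = j then sqrt (1 / t^2 - a $ i) - 1 / t + t / 2 * a $ i else 0)"
    by (simp add: Ahalf_def diagA_def mat_def fun_eq_iff vec_eq_iff)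
  then show ?thesis by (simp only:) (rule bigo_at0_diag, rule sqrt_shift_expansion)
qed

lemma matrix_numeral_mult:
  fixes A :: "real^'n^'m"
  shows "numeral w * A = (numeral w :: real) *\<^sub>R A" "A * numeral w = (numeral w :: real) *\<^sub>R A"
  by (simp_all add: vec_eq_iff)

lemmas matrix_mult_distribs =
  bounded_bilinear.add_left[OF bounded_bilinear_matrix_mult]
  bounded_bilinear.add_right[OF bounded_bilinear_matrix_mult]
  bounded_bilinear.diff_left[OF bounded_bilinear_matrix_mult]
  bounded_bilinear.diff_right[OF bounded_bilinear_matrix_mult]
  bounded_bilinear.minus_left[OF bounded_bilinear_matrix_mult]
  bounded_bilinear.minus_right[OF bounded_bilinear_matrix_mult]
  bounded_bilinear.scaleR_left[OF bounded_bilinear_matrix_mult]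
  bounded_bilinear.scaleR_right[OF bounded_bilinear_matrix_mult]

definition riccati_lhs :: "real^'n^'n \<Rightarrow> real^'r^'n \<Rightarrow> real^'r^'n \<Rightarrow> real^'r^'r \<Rightarrow> real^'r^'r" where
  "riccati_lhs S X P G = G ** (transpose X ** S ** X) ** G + G ** (transpose X ** S ** P)
     + transpose P ** S ** X ** G - (mat 1 - transpose P ** S ** P)"

lemma riccati_iff_lhs: "riccati lam a X P G \<longleftrightarrow> riccati_lhs (Ainv lam a) X P G = 0"
proof -
  have "transpose (Ainv lam a) = Ainv lam a"
    by (simp add: Ainv_def transpose_def vec_eq_iff)
  then have "transpose (transpose X ** Ainv lam a ** P) = transpose P ** Ainv lam a ** X"
    by (simp add: matrix_transpose_mul matrix_mul_assoc)
  then show ?thesis by (simp add: riccati_def riccati_lhs_def Let_def)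
qed

definition riccati_remainder ::
    "real \<Rightarrow> real^'r^'n \<Rightarrow> real^'r^'n \<Rightarrow> real^'n^'n \<Rightarrow> real^'n^'n \<Rightarrow> real^'r^'r \<Rightarrow> real^'r^'r"
  where "riccati_remainder t X P D R G =
      (1 / t^2) *\<^sub>R (transpose X ** R ** X) + (1 / t) *\<^sub>R (transpose X ** R ** P + transpose P ** R ** X)
      + transpose P ** R ** P
      + t^3 *\<^sub>R (transpose X ** D ** P + transpose P ** D ** X + transpose X ** D ** X ** G
                  + G ** transpose X ** D ** X)
      + t^4 *\<^sub>R (transpose P ** D ** P)
      + (1 / t) *\<^sub>R (transpose X ** R ** X ** G + G ** transpose X ** R ** X)
      + t^2 *\<^sub>R (G ** G + G ** transpose X ** P + transpose P ** X ** G)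
      + t^4 *\<^sub>R (G ** transpose X ** D ** X ** G + G ** transpose X ** D ** P
                  + transpose P ** D ** X ** G)
      + G ** transpose X ** R ** X ** G + G ** transpose X ** R ** P + transpose P ** R ** X ** G"

lemma riccati_lhs_split:
  fixes X P :: "real^'r^'n" and D R :: "real^'n^'n" and G :: "real^'r^'r"
  assumes orth: "transpose X ** X = mat 1" and "t \<noteq> 0"
  shows "riccati_lhs (t^2 *\<^sub>R mat 1 + t^4 *\<^sub>R D + R) X P ((1 / t) *\<^sub>R mat 1 + G)
    = (2 * t) *\<^sub>R G + t^2 *\<^sub>R (transpose X ** D ** X + transpose P ** P)
      + t *\<^sub>R (transpose X ** P + transpose P ** X) + riccati_remainder t X P D R G"
proof -
  have orth': "B ** transpose X ** X = B" for B :: "real^'r^'r"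
    by (metis matrix_mul_assoc orth matrix_mul_rid)
  show ?thesis
    unfolding riccati_lhs_def riccati_remainder_def
    using \<open>t \<noteq> 0\<close>
    by (simp add: matrix_mult_distribs matrix_mul_assoc algebra_simps orth orth' matrix_transpose_mul
        power2_eq_square power3_eq_cube power4_eq_xxxx matrix_numeral_mult)
qed

lemma bigo_at0_riccati_remainder:
  assumes "bigo_at0 R 6" "bigo_at0 G 1"
  shows "bigo_at0 (\<lambda>t. riccati_remainder t X P D (R t) (G t)) 3"
  unfolding riccati_remainder_def by (rule bigo_at0_mono, (rule bigo_at0_intros assms)+, simp)

lemma riccati_branch_expansion:
  fixes X P :: "real^'r^'n" and \<Gamma> :: "real \<Rightarrow> real^'r^'r"
  assumes orth: "transpose X ** X = mat 1"
    and tang: "transpose X ** P + transpose P ** X = 0"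
    and sol: "\<forall>\<^sub>F t in at_right 0. riccati (1 / t^2) a X P (\<Gamma> t)"
    and branch: "bigo_at0 (\<lambda>t. \<Gamma> t - (1 / t) *\<^sub>R mat 1) 1"
  shows "bigo_at0 (\<lambda>t. \<Gamma> t - ((1 / t) *\<^sub>R mat 1
            - (t / 2) *\<^sub>R (transpose X ** diagA a ** X + transpose P ** P))) 2"
proof -
  define G where "G t = \<Gamma> t - (1 / t) *\<^sub>R mat 1" for t
  define R where "R t = Ainv (1 / t^2) a - t^2 *\<^sub>R mat 1 - t^4 *\<^sub>R diagA a" for t
  define M where "M = transpose X ** diagA a ** X + transpose P ** P"
  have "\<forall>\<^sub>F t in at_right 0. (2 * t) *\<^sub>R G t + t^2 *\<^sub>R M = - riccati_remainder t X P (diagA a) (R t) (G t)"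
    using sol eventually_at_right_less
  proof eventually_elim
    case (elim t)
    have "Ainv (1 / t^2) a = t^2 *\<^sub>R mat 1 + t^4 *\<^sub>R diagA a + R t" "\<Gamma> t = (1 / t) *\<^sub>R mat 1 + G t"
      by (simp_all add: R_def G_def)
    with elim show ?case
      using riccati_lhs_split[OF orth, of t "diagA a" "R t" P "G t"]
      by (simp add: riccati_iff_lhs tang M_def eq_neg_iff_add_eq_0)
  qed
  moreover have "bigo_at0 (\<lambda>t. - riccati_remainder t X P (diagA a) (R t) (G t)) 3"
    using Ainv_expansion branch unfolding R_def G_def
    by (intro bigo_at0_minus bigo_at0_riccati_remainder)
  ultimately have lead: "bigo_at0 (\<lambda>t. (2 * t) *\<^sub>R G t + t^2 *\<^sub>R M) 3"
    by (rule bigo_at0_cong)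
  have "bigo_at0 (\<lambda>t. (1 / t / 2) *\<^sub>R ((2 * t) *\<^sub>R G t + t^2 *\<^sub>R M)) 2"
    by (rule bigo_at0_mono, (rule lead bigo_at0_intros)+, simp)
  then show ?thesis
    by (rule bigo_at0_cong[rotated], intro eventually_mono[OF eventually_at_right_less])
       (simp add: G_def M_def algebra_simps power2_eq_square)
qed

lemma Xtilde_expansion:
  assumes branch: "bigo_at0 (\<lambda>t. \<Gamma> t - (1 / t) *\<^sub>R mat 1) 1"
  shows "bigo_at0 (\<lambda>t. Xtilde (1 / t^2) a X P (\<Gamma> t) - (X + t *\<^sub>R P)) 2"
proof -
  define G where "G t = \<Gamma> t - (1 / t) *\<^sub>R mat 1" for t
  define R where "R t = Aminushalf (1 / t^2) a - t *\<^sub>R mat 1 - (t^3 / 2) *\<^sub>R diagA a" for t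
  define D where "D = diagA a"
  define rest where "rest t = t *\<^sub>R (X ** G t) + (t^3 / 2) *\<^sub>R (D ** P) + (t^2 / 2) *\<^sub>R (D ** X)
     + (t^3 / 2) *\<^sub>R (D ** X ** G t) + R t ** P + (1 / t) *\<^sub>R (R t ** X) + R t ** X ** G t" for t
  have G: "bigo_at0 G 1" and R: "bigo_at0 R 5"
    using branch Aminushalf_expansion unfolding G_def R_def .
  have "\<forall>\<^sub>F t in at_right 0. Xtilde (1 / t^2) a X P (\<Gamma> t) - (X + t *\<^sub>R P) = rest t"
  proof (rule eventually_mono[OF eventually_at_right_less])
    fix t :: real assume "0 < t"
    have expansions: "Aminushalf (1 / t^2) a = t *\<^sub>R mat 1 + (t^3 / 2) *\<^sub>R D + R t"
      "\<Gamma> t = (1 / t) *\<^sub>R mat 1 + G t"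
      by (simp_all add: R_def D_def G_def)
    from \<open>0 < t\<close> show "Xtilde (1 / t^2) a X P (\<Gamma> t) - (X + t *\<^sub>R P) = rest t"
      unfolding Xtilde_def rest_def expansions
      by (simp add: matrix_mult_distribs matrix_mul_assoc algebra_simps power2_eq_square power3_eq_cube)
  qed
  moreover have "bigo_at0 rest 2"
    unfolding rest_def by (rule bigo_at0_mono, (rule bigo_at0_intros G R)+, simp)
  ultimately show ?thesis by (rule bigo_at0_cong)
qed

lemma Ptilde_expansion:
  assumes second_order: "bigo_at0 (\<lambda>t. \<Gamma> t - ((1 / t) *\<^sub>R mat 1 - (t / 2) *\<^sub>R M)) 2"
  shows "bigo_at0 (\<lambda>t. Ptilde (1 / t^2) a X P (\<Gamma> t) - (P + t *\<^sub>R (diagA a ** X - X ** M))) 2"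
proof -
  define H where "H t = \<Gamma> t - ((1 / t) *\<^sub>R mat 1 - (t / 2) *\<^sub>R M)" for t
  define G where "G t = \<Gamma> t - (1 / t) *\<^sub>R mat 1" for t
  define R where "R t = Aminushalf (1 / t^2) a - t *\<^sub>R mat 1 - (t^3 / 2) *\<^sub>R diagA a" for t
  define T where "T t = Ahalf (1 / t^2) a - (1 / t) *\<^sub>R mat 1 + (t / 2) *\<^sub>R diagA a" for t
  define D where "D = diagA a"
  define rest where "rest t = t *\<^sub>R (P ** G t) + t *\<^sub>R (X ** G t ** G t) + (t^2 / 2) *\<^sub>R (D ** P)
     + (t^3 / 2) *\<^sub>R (D ** P ** G t) + t^2 *\<^sub>R (D ** X ** G t) + (t^3 / 2) *\<^sub>R (D ** X ** G t ** G t)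
     + (1 / t) *\<^sub>R (R t ** P) + R t ** P ** G t + (1 / t^2) *\<^sub>R (R t ** X)
     + (1 / t) *\<^sub>R (2 *\<^sub>R (R t ** X ** G t)) + R t ** X ** G t ** G t - T t ** X" for t
  have H: "bigo_at0 H 2" and R: "bigo_at0 R 5" and T: "bigo_at0 T 3"
    using second_order Aminushalf_expansion Ahalf_expansion unfolding H_def R_def T_def .
  have G: "bigo_at0 G 1"
  proof (rule bigo_at0_cong)
    show "\<forall>\<^sub>F t in at_right 0. G t = H t - (t / 2) *\<^sub>R M"
      by (simp add: G_def H_def)
    show "bigo_at0 (\<lambda>t. H t - (t / 2) *\<^sub>R M) 1"
      by (rule bigo_at0_mono, (rule bigo_at0_intros H)+, simp)
  qed
  have "\<forall>\<^sub>F t in at_right 0. Ptilde (1 / t^2) a X P (\<Gamma> t) - (P + t *\<^sub>R (D ** X - X ** M))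
      = 2 *\<^sub>R (X ** H t) + rest t"
  proof (rule eventually_mono[OF eventually_at_right_less])
    fix t :: real assume "0 < t"
    have expansions: "Aminushalf (1 / t^2) a = t *\<^sub>R mat 1 + (t^3 / 2) *\<^sub>R D + R t"
      "Ahalf (1 / t^2) a = (1 / t) *\<^sub>R mat 1 - (t / 2) *\<^sub>R D + T t"
      "\<Gamma> t = (1 / t) *\<^sub>R mat 1 + G t" "H t = G t + (t / 2) *\<^sub>R M"
      by (simp_all add: R_def T_def D_def G_def H_def)
    from \<open>0 < t\<close> show "Ptilde (1 / t^2) a X P (\<Gamma> t) - (P + t *\<^sub>R (D ** X - X ** M))
      = 2 *\<^sub>R (X ** H t) + rest t"
      unfolding Ptilde_def rest_def expansions
      by (simp add: matrix_mult_distribs matrix_mul_assoc algebra_simps power2_eq_square power3_eq_cube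
          matrix_numeral_mult)
  qed
  moreover have "bigo_at0 (\<lambda>t. 2 *\<^sub>R (X ** H t) + rest t) 2"
    unfolding rest_def by (rule bigo_at0_mono, (rule bigo_at0_intros G H R T)+, simp)
  ultimately show ?thesis unfolding D_def by (rule bigo_at0_cong)
qed

theorem mainTheorem17:
  fixes a :: "real^'n" and X P :: "real^'r^'n" and \<Gamma> :: "real \<Rightarrow> real^'r^'r"
  assumes orth: "transpose X ** X = mat 1"
    and tang: "transpose X ** P + transpose P ** X = 0"
    and sol: "\<forall>\<^sub>F \<tau> in at_right 0.
                transpose (\<Gamma> \<tau>) = \<Gamma> \<tau> \<and> riccati (1 / \<tau>^2) a X P (\<Gamma> \<tau>)"
    and branch: "(\<lambda>\<tau>. norm (\<Gamma> \<tau> - (1 / \<tau>) *\<^sub>R mat 1)) \<in> O[at_right 0](\<lambda>\<tau>. \<tau>)"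
  shows "(\<lambda>\<tau>. norm (\<Gamma> \<tau> - ((1 / \<tau>) *\<^sub>R mat 1
              - (\<tau> / 2) *\<^sub>R (transpose X ** diagA a ** X + transpose P ** P))))
           \<in> O[at_right 0](\<lambda>\<tau>. \<tau>^2)
    \<and> (\<lambda>\<tau>. norm (Xtilde (1 / \<tau>^2) a X P (\<Gamma> \<tau>) - (X + \<tau> *\<^sub>R P)))
           \<in> O[at_right 0](\<lambda>\<tau>. \<tau>^2)
    \<and> (\<lambda>\<tau>. norm (Ptilde (1 / \<tau>^2) a X P (\<Gamma> \<tau>)
              - (P + \<tau> *\<^sub>R (diagA a ** X
                   + X ** (- (transpose X ** diagA a ** X) - transpose P ** P)))))
           \<in> O[at_right 0](\<lambda>\<tau>. \<tau>^2)"
proof -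
  let ?M = "transpose X ** diagA a ** X + transpose P ** P"
  have branch': "bigo_at0 (\<lambda>t. \<Gamma> t - (1 / t) *\<^sub>R mat 1) 1"
    using branch by (simp add: bigo_at0_def)
  have sol': "\<forall>\<^sub>F t in at_right 0. riccati (1 / t^2) a X P (\<Gamma> t)"
    using sol by (rule eventually_mono) simp
  have \<Gamma>: "bigo_at0 (\<lambda>t. \<Gamma> t - ((1 / t) *\<^sub>R mat 1 - (t / 2) *\<^sub>R ?M)) 2"
    by (rule riccati_branch_expansion[OF orth tang sol' branch'])
  have "X ** (- (transpose X ** diagA a ** X) - transpose P ** P) = - (X ** ?M)"
    by (simp add: matrix_mult_distribs)
  with \<Gamma> Xtilde_expansion[OF branch', where a = a and X = X and P = P]
    Ptilde_expansion[OF \<Gamma>, where a = a and X = X and P = P] show ?thesis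
    unfolding bigo_at0_def power_int_numeral by simp
qed

end
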